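(* Let $\mathfrak l$ be a real finite-dimensional nilpotent admissible Lie algebra with $\dim\mathfrak l'=2$ and $\mathfrak l'\subset\mathfrak z(\mathfrak l)$, and let $n=\dim\mathfrak l-2$. Then there is a basis $X_1,\dots,X_n,Y,Z$ of $\mathfrak l$ such that $[X_1,X_2]=Y$, $[X_1,X_3]=Z$, $[X_2,X_3]=0$, and (if $n\ge4$) $[X_1,X_4]=0$, $[X_2,X_4]=\lambda Z$ for some $\lambda\in\{0,1\}$, and $[X_1,X_j]=[X_2,X_j]=0$ for all $j\ge5$. Moreover, for any such basis and any $j_0$ with $[X_1,X_j]=[X_2,X_j]=[X_3,X_j]=0$ for all $j\ge j_0$, we have $[X_r,X_s]=0$ for all $r,s\ge j_0$.
   Context: For a Lie algebra $\mathfrak l$: $\mathfrak l^1=\mathfrak l$, $\mathfrak l^{k+1}=[\mathfrak l,\mathfrak l^k]$, $\mathfrak l'=\mathfrak l^2$, $\mathfrak z(\mathfrak l)$ the centre. An orthogonal $\mathfrak l$-module $(\rho,\mathfrak a)$ is a finite-dimensional real vector space with a nondegenerate symmetric bilinear form $\langle\cdot,\cdot\rangle_{\mathfrak a}$ and a representation by skew-adjoint maps. $C^p(\mathfrak l,\mathfrak a)$: alternating $p$-linear maps with Chevalley–Eilenberg differential $d$; $C^p(\mathfrak l)=C^p(\mathfrak l,\mathbb R)$; $\langle\alpha\wedge\beta\rangle$ is the wedge product followed by contraction with $\langle\cdot,\cdot\rangle_{\mathfrak a}$. $\mathcal Z^2_Q(\mathfrak l,\mathfrak a)=\{(\alpha,\gamma)\in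 C^2(\mathfrak l,\mathfrak a)\oplus C^3(\mathfrak l): d\alpha=0,d\gamma=\frac12\langle\alpha\wedge\alpha\rangle\}$; the group $C^1(\mathfrak l,\mathfrak a)\oplus C^2(\mathfrak l)$ with $(\tau_1,\sigma_1)*(\tau_2,\sigma_2)=(\tau_1+\tau_2,\sigma_1+\sigma_2+\frac12\langle\tau_1\wedge\tau_2\rangle)$ acts by $(\alpha,\gamma)(\tau,\sigma)=(\alpha+d\tau,\gamma+d\sigma+\langle(\alpha+\frac12d\tau)\wedge\tau\rangle)$; $\mathcal H^2_Q(\mathfrak l,\mathfrak a)$ is the orbit set. Admissibility: for semisimple $(\rho,\mathfrak a)$, with $\mathfrak l^{m+2}=0$, $\mathfrak l_{(0)}=\mathfrak z(\mathfrak l)\cap\ker\rho$, $\mathfrak l_{(k)}=\mathfrak z(\mathfrak l)\cap\mathfrak l^{k+1}$ ($k\ge1$), and a representative with $\alpha(\mathfrak l,\mathfrak l)\subset\mathfrak a^{\mathfrak l}$, a class is admissible iff for all $0\le k\le m$: $(A_k)$ whenever $L_0\in\mathfrak l_{(k)}$ and there are $A_0\in\mathfrak a$, $Z_0\in(\mathfrak l^{k+1})^*$ with $\alpha(L,L_0)=0$ and $\gamma(L,L_0,\cdot)=-\langle A_0,\alpha(L,\cdot)\rangle_{\mathfrak a}+\langle Z_0,[L,\cdot]\rangle$ on $\mathfrak l^{k+1}$ for all $L$, then $L_0=0$; $(B_k)$ $\alpha$ applied to the kernel of the bracket map $\mathfrak l\otimes\mathfrak l^{k+1}\to\mathfrak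 l$ is a nondegenerate subspace of $\mathfrak a$. $\mathfrak l$ is admissible if some semisimple orthogonal module admits an admissible class. *)

theory Defs
  imports "HOL-Analysis.Analysis"
begin

text \<open>A Lie algebra is modelled on a Euclidean space type (a finite-dimensional real
vector space; the inner product plays no role) together with a bracket.\<close>

definition lie_algebra :: "('a::euclidean_space \<Rightarrow> 'a \<Rightarrow> 'a) \<Rightarrow> bool" where
  "lie_algebra br \<longleftrightarrow>
     (\<forall>x. linear (br x)) \<and> (\<forall>y. linear (\<lambda>x. br x y)) \<and>
     (\<forall>x. br x x = 0) \<and>
     (\<forall>x y z. br x (br y z) + br y (br z x) + br z (br x y) = 0)"

text \<open>Lower central series, shifted: lcs0 br k is the term with index k+1,
so lcs0 br 0 is the whole algebra and lcs0 br 1 is the derived algebra.\<close>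

primrec lcs0 :: "('a::euclidean_space \<Rightarrow> 'a \<Rightarrow> 'a) \<Rightarrow> nat \<Rightarrow> 'a set" where
  "lcs0 br 0 = UNIV"
| "lcs0 br (Suc k) = span {br x y |x y. y \<in> lcs0 br k}"

definition nilpotent_lie :: "('a::euclidean_space \<Rightarrow> 'a \<Rightarrow> 'a) \<Rightarrow> bool" where
  "nilpotent_lie br \<longleftrightarrow> (\<exists>m. lcs0 br m = {0})"

definition centre :: "('a::euclidean_space \<Rightarrow> 'a \<Rightarrow> 'a) \<Rightarrow> 'a set" where
  "centre br = {z. \<forall>x. br x z = 0}"

text \<open>The module is the subspace V of a Euclidean space type (allowing dimension 0);
rho is the action, B the nondegenerate symmetric bilinear form.\<close>

definition rho_invariant :: "('a \<Rightarrow> 'v \<Rightarrow> 'v) \<Rightarrow> 'v set \<Rightarrow> bool" where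
  "rho_invariant \<rho> W \<longleftrightarrow> (\<forall>x. \<forall>w\<in>W. \<rho> x w \<in> W)"

definition semisimple_orthogonal_module ::
  "('a::euclidean_space \<Rightarrow> 'a \<Rightarrow> 'a) \<Rightarrow> 'v::euclidean_space set \<Rightarrow> ('a \<Rightarrow> 'v \<Rightarrow> 'v)
   \<Rightarrow> ('v \<Rightarrow> 'v \<Rightarrow> real) \<Rightarrow> bool" where
  "semisimple_orthogonal_module br V \<rho> B \<longleftrightarrow>
     subspace V \<and> rho_invariant \<rho> V \<and>
     (\<forall>x. linear (\<rho> x)) \<and> (\<forall>v. linear (\<lambda>x. \<rho> x v)) \<and>
     (\<forall>x y. \<forall>v\<in>V. \<rho> (br x y) v = \<rho> x (\<rho> y v) - \<rho> y (\<rho> x v)) \<and>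
     (\<forall>v. linear (B v)) \<and> (\<forall>w. linear (\<lambda>v. B v w)) \<and>
     (\<forall>v\<in>V. \<forall>w\<in>V. B v w = B w v) \<and>
     (\<forall>v\<in>V. (\<forall>w\<in>V. B v w = 0) \<longrightarrow> v = 0) \<and>
     (\<forall>x. \<forall>v\<in>V. \<forall>w\<in>V. B (\<rho> x v) w = - B v (\<rho> x w)) \<and>
     \<comment> \<open>semisimple = completely reducible\<close>
     (\<forall>W. subspace W \<and> W \<subseteq> V \<and> rho_invariant \<rho> W \<longrightarrow>
        (\<exists>U. subspace U \<and> U \<subseteq> V \<and> rho_invariant \<rho> U \<and> W \<inter> U = {0} \<and>
             (\<forall>v\<in>V. \<exists>w\<in>W. \<exists>u\<in>U. v = w + u)))"

definition invariants :: "('a \<Rightarrow> 'v \<Rightarrow> 'v) \<Rightarrow> 'v::real_vector set \<Rightarrow> 'v set" where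
  "invariants \<rho> V = {v\<in>V. \<forall>x. \<rho> x v = 0}"

definition cochain2 :: "'v::euclidean_space set \<Rightarrow> ('a::euclidean_space \<Rightarrow> 'a \<Rightarrow> 'v) \<Rightarrow> bool" where
  "cochain2 V \<alpha> \<longleftrightarrow> (\<forall>x. linear (\<alpha> x)) \<and> (\<forall>y. linear (\<lambda>x. \<alpha> x y)) \<and>
     (\<forall>x. \<alpha> x x = 0) \<and> (\<forall>x y. \<alpha> x y \<in> V)"

definition cochain3 :: "('a::euclidean_space \<Rightarrow> 'a \<Rightarrow> 'a \<Rightarrow> real) \<Rightarrow> bool" where
  "cochain3 \<gamma> \<longleftrightarrow> (\<forall>x y. linear (\<gamma> x y)) \<and> (\<forall>x z. linear (\<lambda>y. \<gamma> x y z)) \<and>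
     (\<forall>y z. linear (\<lambda>x. \<gamma> x y z)) \<and>
     (\<forall>x z. \<gamma> x x z = 0) \<and> (\<forall>x y. \<gamma> x y y = 0) \<and> (\<forall>x y. \<gamma> x y x = 0)"

text \<open>Chevalley--Eilenberg differential of a 2-cochain with values in the module.\<close>
definition d2 :: "('a \<Rightarrow> 'a \<Rightarrow> 'a) \<Rightarrow> ('a \<Rightarrow> 'v \<Rightarrow> 'v) \<Rightarrow> ('a \<Rightarrow> 'a \<Rightarrow> 'v::real_vector)
                 \<Rightarrow> 'a \<Rightarrow> 'a \<Rightarrow> 'a \<Rightarrow> 'v" where
  "d2 br \<rho> \<alpha> x y z =
     \<rho> x (\<alpha> y z) - \<rho> y (\<alpha> x z) + \<rho> z (\<alpha> x y)
     - \<alpha> (br x y) z + \<alpha> (br x z) y - \<alpha> (br y z) x"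

text \<open>Chevalley--Eilenberg differential of a real 3-cochain (trivial coefficients).\<close>
definition d3 :: "('a \<Rightarrow> 'a \<Rightarrow> 'a) \<Rightarrow> ('a \<Rightarrow> 'a \<Rightarrow> 'a \<Rightarrow> real) \<Rightarrow> 'a \<Rightarrow> 'a \<Rightarrow> 'a \<Rightarrow> 'a \<Rightarrow> real" where
  "d3 br \<gamma> x1 x2 x3 x4 =
     - \<gamma> (br x1 x2) x3 x4 + \<gamma> (br x1 x3) x2 x4 - \<gamma> (br x1 x4) x2 x3
     - \<gamma> (br x2 x3) x1 x4 + \<gamma> (br x2 x4) x1 x3 - \<gamma> (br x3 x4) x1 x2"

text \<open>Half of the contracted wedge square of a 2-cochain (shuffle convention).\<close>
definition half_wedge_sq :: "('v \<Rightarrow> 'v \<Rightarrow> real) \<Rightarrow> ('a \<Rightarrow> 'a \<Rightarrow> 'v) \<Rightarrow> 'a \<Rightarrow> 'a \<Rightarrow> 'a \<Rightarrow> 'a \<Rightarrow> real" where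
  "half_wedge_sq B \<alpha> x1 x2 x3 x4 =
     B (\<alpha> x1 x2) (\<alpha> x3 x4) - B (\<alpha> x1 x3) (\<alpha> x2 x4) + B (\<alpha> x1 x4) (\<alpha> x2 x3)"

definition quad_cocycle ::
  "('a::euclidean_space \<Rightarrow> 'a \<Rightarrow> 'a) \<Rightarrow> 'v::euclidean_space set \<Rightarrow> ('a \<Rightarrow> 'v \<Rightarrow> 'v)
   \<Rightarrow> ('v \<Rightarrow> 'v \<Rightarrow> real) \<Rightarrow> ('a \<Rightarrow> 'a \<Rightarrow> 'v) \<Rightarrow> ('a \<Rightarrow> 'a \<Rightarrow> 'a \<Rightarrow> real) \<Rightarrow> bool" where
  "quad_cocycle br V \<rho> B \<alpha> \<gamma> \<longleftrightarrow>
     cochain2 V \<alpha> \<and> cochain3 \<gamma> \<and>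
     (\<forall>x y z. d2 br \<rho> \<alpha> x y z = 0) \<and>
     (\<forall>x1 x2 x3 x4. d3 br \<gamma> x1 x2 x3 x4 = half_wedge_sq B \<alpha> x1 x2 x3 x4)"

definition lsub :: "('a::euclidean_space \<Rightarrow> 'a \<Rightarrow> 'a) \<Rightarrow> 'v::real_vector set \<Rightarrow> ('a \<Rightarrow> 'v \<Rightarrow> 'v)
                   \<Rightarrow> nat \<Rightarrow> 'a set" where
  "lsub br V \<rho> k =
     (if k = 0 then {z \<in> centre br. \<forall>v\<in>V. \<rho> z v = 0} else centre br \<inter> lcs0 br k)"

definition cond_A ::
  "('a::euclidean_space \<Rightarrow> 'a \<Rightarrow> 'a) \<Rightarrow> 'v::euclidean_space set \<Rightarrow> ('a \<Rightarrow> 'v \<Rightarrow> 'v)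
   \<Rightarrow> ('v \<Rightarrow> 'v \<Rightarrow> real) \<Rightarrow> ('a \<Rightarrow> 'a \<Rightarrow> 'v) \<Rightarrow> ('a \<Rightarrow> 'a \<Rightarrow> 'a \<Rightarrow> real) \<Rightarrow> nat \<Rightarrow> bool" where
  "cond_A br V \<rho> B \<alpha> \<gamma> k \<longleftrightarrow>
     (\<forall>L0. L0 \<in> lsub br V \<rho> k \<and>
        (\<exists>A0\<in>V. \<exists>Z0::'a \<Rightarrow> real. linear Z0 \<and>
           (\<forall>L. \<alpha> L L0 = 0) \<and>
           (\<forall>L. \<forall>X\<in>lcs0 br k. \<gamma> L L0 X = - B A0 (\<alpha> L X) + Z0 (br L X)))
      \<longrightarrow> L0 = 0)"

text \<open>Image under alpha of the kernel of the bracket map from l tensor l^(k+1) to l;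
elements of the tensor product are written as finite sums of pure tensors.\<close>
definition alpha_kernel_image ::
  "('a::euclidean_space \<Rightarrow> 'a \<Rightarrow> 'a) \<Rightarrow> ('a \<Rightarrow> 'a \<Rightarrow> 'v::real_vector) \<Rightarrow> nat \<Rightarrow> 'v set" where
  "alpha_kernel_image br \<alpha> k =
     {sum_list (map (\<lambda>(x, y). \<alpha> x y) ps) |ps.
        (\<forall>(x, y)\<in>set ps. y \<in> lcs0 br k) \<and> sum_list (map (\<lambda>(x, y). br x y) ps) = 0}"

definition nondegenerate_subspace :: "('v \<Rightarrow> 'v \<Rightarrow> real) \<Rightarrow> 'v::real_vector set \<Rightarrow> bool" where
  "nondegenerate_subspace B W \<longleftrightarrow> (\<forall>w\<in>W. (\<forall>u\<in>W. B w u = 0) \<longrightarrow> w = 0)"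

definition cond_B ::
  "('a::euclidean_space \<Rightarrow> 'a \<Rightarrow> 'a) \<Rightarrow> ('v::real_vector \<Rightarrow> 'v \<Rightarrow> real) \<Rightarrow> ('a \<Rightarrow> 'a \<Rightarrow> 'v) \<Rightarrow> nat \<Rightarrow> bool" where
  "cond_B br B \<alpha> k \<longleftrightarrow> nondegenerate_subspace B (alpha_kernel_image br \<alpha> k)"

text \<open>An admissible class in quadratic cohomology of a semisimple orthogonal module,
given by a representative (alpha, gamma) with alpha(l,l) in the invariants.
Conditions are required for all k; for k > m (with l^(m+2) = 0) they hold trivially.\<close>
definition admissible_data ::
  "('a::euclidean_space \<Rightarrow> 'a \<Rightarrow> 'a) \<Rightarrow> 'v::euclidean_space set \<Rightarrow> ('a \<Rightarrow> 'v \<Rightarrow> 'v)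
   \<Rightarrow> ('v \<Rightarrow> 'v \<Rightarrow> real) \<Rightarrow> ('a \<Rightarrow> 'a \<Rightarrow> 'v) \<Rightarrow> ('a \<Rightarrow> 'a \<Rightarrow> 'a \<Rightarrow> real) \<Rightarrow> bool" where
  "admissible_data br V \<rho> B \<alpha> \<gamma> \<longleftrightarrow>
     semisimple_orthogonal_module br V \<rho> B \<and>
     quad_cocycle br V \<rho> B \<alpha> \<gamma> \<and>
     (\<forall>x y. \<alpha> x y \<in> invariants \<rho> V) \<and>
     (\<forall>k. cond_A br V \<rho> B \<alpha> \<gamma> k \<and> cond_B br B \<alpha> k)"

definition is_basis_XYZ :: "nat \<Rightarrow> (nat \<Rightarrow> 'a::euclidean_space) \<Rightarrow> 'a \<Rightarrow> 'a \<Rightarrow> bool" where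
  "is_basis_XYZ n X Y Z \<longleftrightarrow>
     inj_on X {1..n} \<and> Y \<notin> X ` {1..n} \<and> Z \<notin> X ` {1..n} \<and> Y \<noteq> Z \<and>
     independent (insert Y (insert Z (X ` {1..n}))) \<and>
     span (insert Y (insert Z (X ` {1..n}))) = UNIV"

definition good_basis :: "('a::euclidean_space \<Rightarrow> 'a \<Rightarrow> 'a) \<Rightarrow> nat \<Rightarrow> (nat \<Rightarrow> 'a) \<Rightarrow> 'a \<Rightarrow> 'a \<Rightarrow> bool" where
  "good_basis br n X Y Z \<longleftrightarrow>
     is_basis_XYZ n X Y Z \<and>
     br (X 1) (X 2) = Y \<and> br (X 1) (X 3) = Z \<and> br (X 2) (X 3) = 0 \<and>
     (4 \<le> n \<longrightarrow>
        br (X 1) (X 4) = 0 \<and>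
        (\<exists>c::real. c \<in> {0, 1} \<and> br (X 2) (X 4) = c *\<^sub>R Z) \<and>
        (\<forall>j. 5 \<le> j \<and> j \<le> n \<longrightarrow> br (X 1) (X j) = 0 \<and> br (X 2) (X j) = 0))"

end

theory Submission
  imports Defs
begin

(* Since l' is two-dimensional, some X1 has brackets Y = [X1, X2] and Z = [X1, X3] spanning
   l', and shifting X2, X3 along X1 makes [X2, X3] = 0. Because l' is central,
   Q = {x. [X1, x] = 0 and [X2, x] in R Z} is a complement of span {X1, X2, X3}; the vectors
   X4, ..., Xn extend Y, Z to a basis of Q inside the centralizer of X1 and X2, except that X4
   is chosen with [X2, X4] = Z when such a vector exists (lambda = 1).

   For the second part let u, v commute with X1, X2, X3 and suppose W = [u, v] is nonzero.
   The cocycle equation d alpha = 0 gives alpha(W, -) = 0, and d gamma = 1/2 <alpha ^ alpha>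
   evaluated at (W, w, X1, Xi) and at (u, v, L, X) gives
   gamma(L, W, X) = <alpha(u, v), alpha(L, X)> for all X in l'. So W satisfies the
   hypothesis of condition (A_1) with A0 = -alpha(u, v) and Z0 = 0, a contradiction. *)

lemma independent_pair_iff:
  "independent {p, q} \<and> p \<noteq> q \<longleftrightarrow> p \<noteq> 0 \<and> q \<notin> span {p}"
  using independent_insert[of q "{p}"] span_base[of q "{p}"] by (auto simp: insert_commute)

lemma independent_pair_combination_eq_0:
  assumes "independent {p, q}" "p \<noteq> q" "s *\<^sub>R p + t *\<^sub>R q = 0"
  shows "s = 0 \<and> t = 0"
proof -
  have "p \<noteq> 0" and q: "q \<notin> span {p}" using assms(1,2) independent_pair_iff by blast+
  have "t = 0"
  proof (rule ccontr)
    assume "t \<noteq> 0"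
    then have "q = (1 / t) *\<^sub>R (t *\<^sub>R q)" by simp
    also have "t *\<^sub>R q = (- s) *\<^sub>R p"
      using assms(3) by (simp add: eq_neg_iff_add_eq_0 add.commute)
    finally have "q \<in> span {p}" by (metis span_base span_scale scaleR_scaleR insertI1)
    then show False using q by blast
  qed
  then show ?thesis using assms(3) \<open>p \<noteq> 0\<close> by simp
qed

lemma span_pair_iff: "x \<in> span {p, q} \<longleftrightarrow> (\<exists>s t. x = s *\<^sub>R p + t *\<^sub>R q)"
proof
  assume "x \<in> span {p, q}"
  then obtain s t where "x - s *\<^sub>R p = t *\<^sub>R q" by (auto simp: span_breakdown_eq span_singleton)
  then show "\<exists>s t. x = s *\<^sub>R p + t *\<^sub>R q" by (metis diff_eq_eq add.commute)
qed (auto intro: span_add span_scale span_base)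

lemma subspace_eq_span_pair:
  fixes S :: "'a::euclidean_space set"
  assumes "subspace S" "dim S = 2" "independent {p, q}" "p \<noteq> q" "p \<in> S" "q \<in> S"
  shows "S = span {p, q}"
proof
  show "S \<subseteq> span {p, q}" using assms by (intro card_ge_dim_independent) auto
  show "span {p, q} \<subseteq> S" using assms by (intro span_minimal) auto
qed

lemma independent_list_extend_to_basis:
  fixes ss :: "'a::euclidean_space list"
  assumes "distinct ss" "independent (set ss)" "set ss \<subseteq> M"
  obtains bs where "distinct (ss @ bs)" "independent (set (ss @ bs))" "set bs \<subseteq> M"
    "M \<subseteq> span (set (ss @ bs))"
proof -
  obtain B where B: "set ss \<subseteq> B" "B \<subseteq> M" "independent B" "M \<subseteq> span B"
    using maximal_independent_subset_extend[OF assms(3,2)] by blast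
  obtain bs where bs: "set bs = B - set ss" "distinct bs"
    using finite_distinct_list[of "B - set ss"] finiteI_independent[OF B(3)] by blast
  have set_eq: "set (ss @ bs) = B" using B(1) bs(1) by auto
  show ?thesis
  proof (rule that)
    show "distinct (ss @ bs)" using assms(1) bs by auto
    show "set bs \<subseteq> M" using bs(1) B(2) by auto
  qed (use B(3,4) set_eq in simp_all)
qed

lemma is_basis_XYZ_nth:
  fixes xs :: "'a::euclidean_space list"
  assumes "distinct (Y # Z # xs)" "length xs = n"
    "independent (set (Y # Z # xs))" "span (set (Y # Z # xs)) = UNIV"
  shows "is_basis_XYZ n (\<lambda>j. xs ! (j - 1)) Y Z"
proof -
  have image: "(\<lambda>j. xs ! (j - 1)) ` {1..n} = set xs"
  proof (intro equalityI subsetI)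
    fix x assume "x \<in> set xs"
    then obtain i where "i < n" "x = xs ! (Suc i - 1)" using assms(2) by (auto simp: in_set_conv_nth)
    then show "x \<in> (\<lambda>j. xs ! (j - 1)) ` {1..n}" by force
  qed (use assms(2) in auto)
  have "inj_on (\<lambda>j. xs ! (j - 1)) {1..n}"
    using assms(1,2) by (auto simp: inj_on_def nth_eq_iff_index_eq)
  then show ?thesis using assms unfolding is_basis_XYZ_def image by auto
qed

lemma good_basis_nth:
  assumes "is_basis_XYZ n (\<lambda>j. (X1 # X2 # X3 # ys) ! (j - 1)) Y Z" "length ys + 3 = n"
    and "br X1 X2 = Y" "br X1 X3 = Z" "br X2 X3 = 0"
    and "\<forall>y\<in>set ys. br X1 y = 0" "\<forall>y\<in>set (tl ys). br X2 y = 0"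
    and "ys \<noteq> [] \<longrightarrow> br X2 (hd ys) = 0 \<or> br X2 (hd ys) = Z"
  shows "good_basis br n (\<lambda>j. (X1 # X2 # X3 # ys) ! (j - 1)) Y Z"
proof (cases ys)
  case Nil
  then show ?thesis using assms unfolding good_basis_def by simp
next
  case (Cons y ys')
  have hd_bracket: "\<exists>c::real. c \<in> {0, 1} \<and> br X2 y = c *\<^sub>R Z"
  proof -
    have "br X2 y = 0 \<or> br X2 y = Z" using assms(8) Cons by simp
    then show ?thesis by (metis insertI1 insertI2 singletonI scaleR_one scaleR_zero_left)
  qed
  show ?thesis
    unfolding good_basis_def
  proof (intro conjI allI impI)
    fix j assume j: "5 \<le> j \<and> j \<le> n"
    define i where "i = j - 5"
    have "j - 1 = Suc (Suc (Suc (Suc i)))" "i < length ys'"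
      using j assms(2) Cons unfolding i_def by auto
    then have Xj: "(X1 # X2 # X3 # ys) ! (j - 1) = ys' ! i" "ys' ! i \<in> set ys'"
      using Cons by simp_all
    show "br ((X1 # X2 # X3 # ys) ! (1 - 1)) ((X1 # X2 # X3 # ys) ! (j - 1)) = 0"
      "br ((X1 # X2 # X3 # ys) ! (2 - 1)) ((X1 # X2 # X3 # ys) ! (j - 1)) = 0"
      unfolding Xj(1) using Xj(2) assms(6,7) Cons by simp_all
  qed (use assms(1,3-6) Cons hd_bracket in simp_all)
qed

definition centralizer :: "('a::euclidean_space \<Rightarrow> 'a \<Rightarrow> 'a) \<Rightarrow> 'a set \<Rightarrow> 'a set" where
  "centralizer br S = {x. \<forall>s\<in>S. br s x = 0}"

locale real_lie_algebra =
  fixes br :: "'a::euclidean_space \<Rightarrow> 'a \<Rightarrow> 'a"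
  assumes lie_algebra: "lie_algebra br"
begin

lemma linear_bracket_right: "linear (br x)"
  using lie_algebra unfolding lie_algebra_def by blast

lemma linear_bracket_left: "linear (\<lambda>x. br x y)"
  using lie_algebra unfolding lie_algebra_def by blast

lemmas bracket_simps [simp] =
  linear_add[OF linear_bracket_right] linear_add[OF linear_bracket_left]
  linear_diff[OF linear_bracket_right] linear_diff[OF linear_bracket_left]
  linear_neg[OF linear_bracket_right] linear_neg[OF linear_bracket_left]
  linear_scale[OF linear_bracket_right] linear_scale[OF linear_bracket_left]
  linear_0[OF linear_bracket_right] linear_0[OF linear_bracket_left]

lemma bracket_self [simp]: "br x x = 0"
  using lie_algebra unfolding lie_algebra_def by blast

lemma bracket_antisym: "br y x = - br x y"
proof -
  have "0 = br (x + y) (x + y)" by simp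
  also have "\<dots> = br x y + br y x"
    by (simp del: bracket_self add: bracket_self[of x] bracket_self[of y])
  finally show ?thesis by (metis add.commute eq_neg_iff_add_eq_0)
qed

lemma bracket_in_derived: "br x y \<in> lcs0 br 1"
  by (auto intro: span_base)

lemma subspace_derived: "subspace (lcs0 br 1)"
  by simp

lemma centreD: "z \<in> centre br \<Longrightarrow> br x z = 0 \<and> br z x = 0"
  unfolding centre_def by (auto simp: bracket_antisym[of z])

lemma subspace_centralizer: "subspace (centralizer br S)"
  unfolding subspace_def centralizer_def by simp

lemma exists_independent_brackets_common_left:
  assumes "dim (lcs0 br 1) = 2"
  shows "\<exists>x u v. independent {br x u, br x v} \<and> br x u \<noteq> br x v"
proof -
  define G where "G = {br x y |x y. True}"
  obtain P where P: "P \<subseteq> G" "independent P" "G \<subseteq> span P" "card P = dim G"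
    using basis_exists by blast
  have "card P = 2" using assms P(4) dim_span[of G] by (simp add: G_def)
  then obtain p q where "P = {p, q}" "p \<noteq> q" by (meson card_2_iff)
  then obtain a b c d where abcd: "independent {br a b, br c d}" "br a b \<noteq> br c d"
    using P(1,2) unfolding G_def by blast
  show ?thesis
  proof (rule ccontr)
    \<comment> \<open>Otherwise br a d = br c b = 0, and a + c has the two independent brackets.\<close>
    assume none: "\<not> ?thesis"
    have cross_zero: "br a' d' = 0"
      if "independent {br a' b', br c' d'}" "br a' b' \<noteq> br c' d'" for a' b' c' d'
    proof -
      have "br a' b' \<noteq> 0" "br d' c' \<noteq> 0"
        using that dependent_zero[of "{br a' b', br c' d'}"] bracket_antisym[of d' c'] by auto
      then have "br a' d' \<in> span {br a' b'}" "br d' a' \<in> span {br d' c'}"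
        using none independent_pair_iff by blast+
      then obtain k1 k2 where k1: "br a' d' = k1 *\<^sub>R br a' b'"
        and k2: "br d' a' = k2 *\<^sub>R br d' c'"
        by (auto simp: span_singleton)
      have "k1 *\<^sub>R br a' b' + (- k2) *\<^sub>R br c' d' = 0"
        using k1 k2 by (simp add: bracket_antisym[of d'])
      then have "k1 = 0" using independent_pair_combination_eq_0[OF that] by blast
      then show ?thesis using k1 by simp
    qed
    have "br a d = 0" "br c b = 0"
      using cross_zero[OF abcd] cross_zero[of c d a b] abcd by (auto simp: insert_commute)
    then have "br (a + c) b = br a b" "br (a + c) d = br c d" by simp_all
    then show False using none abcd by metis
  qed
qed

lemma exists_normalized_triple:
  assumes "dim (lcs0 br 1) = 2"
  obtains X1 X2 X3 where "independent {br X1 X2, br X1 X3}" "br X1 X2 \<noteq> br X1 X3"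
    "br X2 X3 = 0"
proof -
  obtain x u v where indep: "independent {br x u, br x v}" "br x u \<noteq> br x v"
    using exists_independent_brackets_common_left[OF assms] by blast
  have "lcs0 br 1 = span {br x u, br x v}"
    using subspace_eq_span_pair[OF subspace_derived assms indep] bracket_in_derived by blast
  then obtain p q where pq: "br u v = p *\<^sub>R br x u + q *\<^sub>R br x v"
    using bracket_in_derived span_pair_iff by blast
  \<comment> \<open>Shifting u and v along x leaves their brackets with x unchanged and kills br u v.\<close>
  show ?thesis
  proof (rule that[of x])
    show "br (u - q *\<^sub>R x) (v + p *\<^sub>R x) = 0"
      using pq by (simp add: bracket_antisym[of _ x] algebra_simps)
  qed (use indep in simp_all)
qed

context
  fixes X1 X2 X3 Y Z :: 'a
  assumes bracket_X1_X2: "br X1 X2 = Y" and bracket_X1_X3: "br X1 X3 = Z"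
    and bracket_X2_X3: "br X2 X3 = 0"
    and independent_Y_Z: "independent {Y, Z}" "Y \<noteq> Z"
    and derived_eq_span: "lcs0 br 1 = span {Y, Z}"
    and derived_central: "lcs0 br 1 \<subseteq> centre br"
begin

abbreviation X123_complement :: "'a set" where
  "X123_complement \<equiv> {x. br X1 x = 0 \<and> br X2 x \<in> span {Z}}"

lemma subspace_X123_complement: "subspace X123_complement"
  unfolding subspace_def by (simp add: span_zero span_add span_scale)

lemma X123_combination_in_complement:
  assumes "a *\<^sub>R X1 + b *\<^sub>R X2 + c *\<^sub>R X3 \<in> X123_complement"
  shows "a = 0 \<and> b = 0 \<and> c = 0"
proof -
  have "b *\<^sub>R Y + c *\<^sub>R Z = 0"
    using assms by (simp add: bracket_X1_X2 bracket_X1_X3)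
  note bc = independent_pair_combination_eq_0[OF independent_Y_Z this]
  have "br X2 (a *\<^sub>R X1 + b *\<^sub>R X2 + c *\<^sub>R X3) = (- a) *\<^sub>R Y"
    using bc by (simp add: bracket_antisym[of X2 X1] bracket_X1_X2)
  then obtain k where "(- a) *\<^sub>R Y = k *\<^sub>R Z"
    using assms by (auto simp: span_singleton)
  then have "(- a) *\<^sub>R Y + (- k) *\<^sub>R Z = 0" by simp
  note independent_pair_combination_eq_0[OF independent_Y_Z this]
  then show ?thesis using bc by simp
qed

lemma bracket_in_span_Y_Z:
  obtains s t where "br x y = s *\<^sub>R Y + t *\<^sub>R Z"
  using bracket_in_derived[of x y] unfolding derived_eq_span span_pair_iff by blast

lemma decompose_modulo_X123_complement:
  obtains a b c where "x - (a *\<^sub>R X1 + b *\<^sub>R X2 + c *\<^sub>R X3) \<in> X123_complement"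
proof -
  obtain p q where pq: "br X1 x = p *\<^sub>R Y + q *\<^sub>R Z"
    by (rule bracket_in_span_Y_Z)
  obtain r s where rs: "br X2 (x - p *\<^sub>R X2 - q *\<^sub>R X3) = r *\<^sub>R Y + s *\<^sub>R Z"
    by (rule bracket_in_span_Y_Z)
  define x' where "x' = x - ((- r) *\<^sub>R X1 + p *\<^sub>R X2 + q *\<^sub>R X3)"
  have "br X1 x' = 0" "br X2 x' = s *\<^sub>R Z"
    using pq rs unfolding x'_def
    by (simp_all add: bracket_X1_X2 bracket_X1_X3 bracket_X2_X3 bracket_antisym[of X2 X1])
  then have "x' \<in> X123_complement" by (simp add: span_base span_scale)
  then show ?thesis unfolding x'_def by (rule that)
qed

lemma X123_notin_span_complement_basis:
  assumes "span S = X123_complement"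
  shows "X3 \<notin> span S" "X2 \<notin> span (insert X3 S)" "X1 \<notin> span (insert X2 (insert X3 S))"
proof -
  show "X3 \<notin> span S"
  proof
    assume "X3 \<in> span S"
    then have "0 *\<^sub>R X1 + 0 *\<^sub>R X2 + 1 *\<^sub>R X3 \<in> X123_complement"
      unfolding assms by simp
    from X123_combination_in_complement[OF this] show False by simp
  qed
  show "X2 \<notin> span (insert X3 S)"
  proof
    assume "X2 \<in> span (insert X3 S)"
    then obtain k where "X2 - k *\<^sub>R X3 \<in> span S"
      unfolding span_breakdown_eq by blast
    then have "0 *\<^sub>R X1 + 1 *\<^sub>R X2 + (- k) *\<^sub>R X3 \<in> X123_complement"
      unfolding assms by simp
    from X123_combination_in_complement[OF this] show False by simp
  qed
  show "X1 \<notin> span (insert X2 (insert X3 S))"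
  proof
    assume "X1 \<in> span (insert X2 (insert X3 S))"
    then obtain k k' where "X1 - k *\<^sub>R X2 - k' *\<^sub>R X3 \<in> span S"
      unfolding span_breakdown_eq by blast
    then have "1 *\<^sub>R X1 + (- k) *\<^sub>R X2 + (- k') *\<^sub>R X3 \<in> X123_complement"
      unfolding assms by (simp add: algebra_simps)
    from X123_combination_in_complement[OF this] show False by simp
  qed
qed

lemma span_X123_insert_complement_basis:
  assumes "span S = X123_complement"
  shows "span (insert X1 (insert X2 (insert X3 S))) = UNIV"
proof (intro equalityI subsetI UNIV_I)
  fix x
  let ?S = "span (insert X1 (insert X2 (insert X3 S)))"
  obtain a b c where "x - (a *\<^sub>R X1 + b *\<^sub>R X2 + c *\<^sub>R X3) \<in> span S"
    using decompose_modulo_X123_complement assms by blast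
  moreover have "span S \<subseteq> ?S" by (rule span_mono) auto
  ultimately have "x - (a *\<^sub>R X1 + b *\<^sub>R X2 + c *\<^sub>R X3) \<in> ?S" by blast
  moreover have "a *\<^sub>R X1 + b *\<^sub>R X2 + c *\<^sub>R X3 \<in> ?S"
    by (intro span_add span_scale span_base) auto
  ultimately have "x - (a *\<^sub>R X1 + b *\<^sub>R X2 + c *\<^sub>R X3) + (a *\<^sub>R X1 + b *\<^sub>R X2 + c *\<^sub>R X3) \<in> ?S"
    by (rule span_add)
  then show "x \<in> ?S" by simp
qed

lemma X123_extend_complement_basis:
  assumes "distinct ms" "independent (set ms)" "span (set ms) = X123_complement"
  shows "distinct (X1 # X2 # X3 # ms)" "independent (set (X1 # X2 # X3 # ms))"
    "span (set (X1 # X2 # X3 # ms)) = UNIV"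
proof -
  note notin_span = X123_notin_span_complement_basis[OF assms(3)]
  show "independent (set (X1 # X2 # X3 # ms))"
    using assms(2) notin_span by (simp add: independent_insertI)
  have "X1 \<notin> insert X2 (insert X3 (set ms))" "X2 \<notin> insert X3 (set ms)" "X3 \<notin> set ms"
    using notin_span span_base by metis+
  then show "distinct (X1 # X2 # X3 # ms)" using assms(1) by simp
  show "span (set (X1 # X2 # X3 # ms)) = UNIV"
    using span_X123_insert_complement_basis[OF assms(3)] by simp
qed

lemma Y_Z_central: "Y \<in> centre br" "Z \<in> centre br"
  using derived_central bracket_in_derived bracket_X1_X2 bracket_X1_X3 by blast+

lemma exists_centralizer_X1_X2_basis:
  obtains bs where "distinct (Y # Z # bs)" "independent (set (Y # Z # bs))"
    "span (set (Y # Z # bs)) = centralizer br {X1, X2}"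
proof -
  let ?M = "centralizer br {X1, X2}"
  have "distinct [Y, Z]" "independent (set [Y, Z])" using independent_Y_Z by simp_all
  moreover have YZ: "set [Y, Z] \<subseteq> ?M"
    using centreD[OF Y_Z_central(1)] centreD[OF Y_Z_central(2)] by (simp add: centralizer_def)
  ultimately obtain bs where bs: "distinct ([Y, Z] @ bs)" "independent (set ([Y, Z] @ bs))"
    "set bs \<subseteq> ?M" "?M \<subseteq> span (set ([Y, Z] @ bs))"
    by (rule independent_list_extend_to_basis)
  have "span (set ([Y, Z] @ bs)) \<subseteq> ?M"
    using bs(3) YZ by (intro span_minimal subspace_centralizer) simp
  with bs show ?thesis using that[of bs] by auto
qed

lemma centralizer_X1_X2_subset_X123_complement: "centralizer br {X1, X2} \<subseteq> X123_complement"
  unfolding centralizer_def by (simp add: span_zero subset_iff)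

lemma X123_complement_eq_centralizer:
  assumes "\<nexists>w. br X1 w = 0 \<and> br X2 w = Z"
  shows "X123_complement = centralizer br {X1, X2}"
proof
  show "X123_complement \<subseteq> centralizer br {X1, X2}"
  proof
    fix x assume "x \<in> X123_complement"
    then obtain s where s: "br X1 x = 0" "br X2 x = s *\<^sub>R Z" by (auto simp: span_singleton)
    have "s = 0"
    proof (rule ccontr)
      assume "s \<noteq> 0"
      then have "br X1 ((1 / s) *\<^sub>R x) = 0 \<and> br X2 ((1 / s) *\<^sub>R x) = Z" using s by simp
      then show False using assms by blast
    qed
    then show "x \<in> centralizer br {X1, X2}" using s by (simp add: centralizer_def)
  qed
qed (rule centralizer_X1_X2_subset_X123_complement)

lemma X123_complement_eq_span_insert:
  assumes "br X1 w = 0" "br X2 w = Z" "span S = centralizer br {X1, X2}"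
  shows "X123_complement = span (insert w S)"
proof
  show "X123_complement \<subseteq> span (insert w S)"
  proof
    fix x assume "x \<in> X123_complement"
    then obtain s where s: "br X1 x = 0" "br X2 x = s *\<^sub>R Z" by (auto simp: span_singleton)
    then have "x - s *\<^sub>R w \<in> span S" using assms by (simp add: centralizer_def)
    then show "x \<in> span (insert w S)" unfolding span_breakdown_eq by blast
  qed
  have "insert w S \<subseteq> X123_complement"
    using assms span_superset[of S] centralizer_X1_X2_subset_X123_complement by (auto intro: span_base)
  then show "span (insert w S) \<subseteq> X123_complement"
    by (rule span_minimal[OF _ subspace_X123_complement])
qed

lemma exists_X123_complement_basis:
  obtains ys where "distinct (Y # Z # ys)" "independent (set (Y # Z # ys))"
    "span (set (Y # Z # ys)) = X123_complement"
    "\<forall>y\<in>set (tl ys). br X2 y = 0" "ys \<noteq> [] \<longrightarrow> br X2 (hd ys) = 0 \<or> br X2 (hd ys) = Z"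
proof -
  obtain bs where bs: "distinct (Y # Z # bs)" "independent (set (Y # Z # bs))"
    "span (set (Y # Z # bs)) = centralizer br {X1, X2}"
    by (rule exists_centralizer_X1_X2_basis)
  have bs_centralizer: "\<forall>b\<in>set bs. br X1 b = 0 \<and> br X2 b = 0"
    using span_superset[of "set (Y # Z # bs)"] bs(3) by (auto simp: centralizer_def)
  show ?thesis
  proof (cases "\<exists>w. br X1 w = 0 \<and> br X2 w = Z")
    case False
    show ?thesis
    proof (rule that[of bs])
      show "span (set (Y # Z # bs)) = X123_complement"
        using bs(3) X123_complement_eq_centralizer[OF False] by simp
      show "\<forall>y\<in>set (tl bs). br X2 y = 0"
        using bs_centralizer by (cases bs) simp_all
      show "bs \<noteq> [] \<longrightarrow> br X2 (hd bs) = 0 \<or> br X2 (hd bs) = Z"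
        using bs_centralizer by (cases bs) simp_all
    qed (use bs(1,2) in simp_all)
  next
    case True
    then obtain w where w: "br X1 w = 0" "br X2 w = Z" by blast
    have "Z \<noteq> 0" using independent_Y_Z dependent_zero by blast
    then have w_new: "w \<notin> span (set (Y # Z # bs))"
      using w bs(3) by (auto simp: centralizer_def)
    have set_w: "set (Y # Z # w # bs) = insert w (set (Y # Z # bs))" by auto
    show ?thesis
    proof (rule that[of "w # bs"])
      have "w \<notin> set (Y # Z # bs)" using w_new span_base by metis
      then show "distinct (Y # Z # w # bs)" using bs(1) by auto
      show "independent (set (Y # Z # w # bs))"
        unfolding set_w using bs(2) w_new by (rule independent_insertI[rotated])
      show "span (set (Y # Z # w # bs)) = X123_complement"
        unfolding set_w using X123_complement_eq_span_insert[OF w bs(3)] by simp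
    qed (use w bs_centralizer in simp_all)
  qed
qed

lemma exists_good_basis_of_triple:
  assumes "DIM('a) = n + 2"
  shows "3 \<le> n \<and> (\<exists>X. good_basis br n X Y Z)"
proof -
  obtain ys where ys: "distinct (Y # Z # ys)" "independent (set (Y # Z # ys))"
    "span (set (Y # Z # ys)) = X123_complement"
    "\<forall>y\<in>set (tl ys). br X2 y = 0" "ys \<noteq> [] \<longrightarrow> br X2 (hd ys) = 0 \<or> br X2 (hd ys) = Z"
    by (rule exists_X123_complement_basis)
  note basis = X123_extend_complement_basis[OF ys(1-3)]
  define xs where "xs = X1 # X2 # X3 # ys"
  have set_xs: "set (Y # Z # xs) = set (X1 # X2 # X3 # Y # Z # ys)" unfolding xs_def by auto
  have basis_xs: "distinct (Y # Z # xs)" "independent (set (Y # Z # xs))"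
    "span (set (Y # Z # xs)) = UNIV"
    using basis unfolding set_xs by (auto simp: xs_def)
  then have "length (Y # Z # xs) = n + 2"
    using basis_card_eq_dim[of "set (Y # Z # xs)" UNIV] distinct_card assms by fastforce
  then have "length xs = n" "length ys + 3 = n" by (simp_all add: xs_def)
  have "\<forall>y\<in>set ys. br X1 y = 0"
    using span_superset[of "set (Y # Z # ys)"] ys(3) by auto
  then have "good_basis br n (\<lambda>j. xs ! (j - 1)) Y Z"
    using good_basis_nth is_basis_XYZ_nth[OF basis_xs(1) \<open>length xs = n\<close> basis_xs(2,3)]
      \<open>length ys + 3 = n\<close> bracket_X1_X2 bracket_X1_X3 bracket_X2_X3 ys(4,5)
    unfolding xs_def by blast
  then show ?thesis using \<open>length ys + 3 = n\<close> by auto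
qed

end

lemma exists_good_basis:
  assumes "dim (lcs0 br 1) = 2" "lcs0 br 1 \<subseteq> centre br" "DIM('a) = n + 2"
  shows "3 \<le> n \<and> (\<exists>X Y Z. good_basis br n X Y Z)"
proof -
  obtain X1 X2 X3 where triple: "independent {br X1 X2, br X1 X3}" "br X1 X2 \<noteq> br X1 X3"
    "br X2 X3 = 0"
    using exists_normalized_triple[OF assms(1)] by blast
  have "lcs0 br 1 = span {br X1 X2, br X1 X3}"
    using subspace_eq_span_pair[OF subspace_derived assms(1) triple(1,2)] bracket_in_derived by blast
  then show ?thesis
    using exists_good_basis_of_triple[OF refl refl triple(3) triple(1,2) _ assms(2,3)] by blast
qed

lemma derived_eq_span_good_basis:
  assumes "good_basis br n X Y Z" "dim (lcs0 br 1) = 2"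
  shows "lcs0 br 1 = span {br (X 1) (X 2), br (X 1) (X 3)}"
proof -
  have "independent {Y, Z}" "Y \<noteq> Z"
    using assms(1) independent_mono[of _ "{Y, Z}"]
    unfolding good_basis_def is_basis_XYZ_def by auto
  moreover have "br (X 1) (X 2) = Y" "br (X 1) (X 3) = Z"
    using assms(1) unfolding good_basis_def by auto
  ultimately show ?thesis
    using subspace_eq_span_pair[OF subspace_derived assms(2)] bracket_in_derived by metis
qed

end

locale invariant_quad_cocycle = real_lie_algebra br for br :: "'a::euclidean_space \<Rightarrow> 'a \<Rightarrow> 'a" +
  fixes V :: "'v::euclidean_space set" and \<rho> :: "'a \<Rightarrow> 'v \<Rightarrow> 'v"
    and B :: "'v \<Rightarrow> 'v \<Rightarrow> real" and \<alpha> :: "'a \<Rightarrow> 'a \<Rightarrow> 'v"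
    and \<gamma> :: "'a \<Rightarrow> 'a \<Rightarrow> 'a \<Rightarrow> real"
  assumes orthogonal_module: "semisimple_orthogonal_module br V \<rho> B"
    and quad_cocycle: "quad_cocycle br V \<rho> B \<alpha> \<gamma>"
    and alpha_invariant: "\<alpha> x y \<in> invariants \<rho> V"
begin

lemma subspace_V: "subspace V"
  using orthogonal_module unfolding semisimple_orthogonal_module_def by blast

lemma linear_B_left: "linear (\<lambda>v. B v w)"
  using orthogonal_module unfolding semisimple_orthogonal_module_def by blast

lemma linear_B_right: "linear (B v)"
  using orthogonal_module unfolding semisimple_orthogonal_module_def by blast

lemmas B_simps [simp] =
  linear_0[OF linear_B_left] linear_0[OF linear_B_right] linear_neg[OF linear_B_left]

lemma linear_alpha_right: "linear (\<alpha> x)"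
  using quad_cocycle unfolding quad_cocycle_def cochain2_def by blast

lemma linear_alpha_left: "linear (\<lambda>x. \<alpha> x y)"
  using quad_cocycle unfolding quad_cocycle_def cochain2_def by blast

lemmas alpha_simps [simp] =
  linear_add[OF linear_alpha_right] linear_add[OF linear_alpha_left]
  linear_neg[OF linear_alpha_right] linear_neg[OF linear_alpha_left]
  linear_scale[OF linear_alpha_right] linear_scale[OF linear_alpha_left]
  linear_0[OF linear_alpha_right] linear_0[OF linear_alpha_left]

lemma alpha_self [simp]: "\<alpha> x x = 0"
  using quad_cocycle unfolding quad_cocycle_def cochain2_def by blast

lemma alpha_antisym: "\<alpha> y x = - \<alpha> x y"
proof -
  have "0 = \<alpha> (x + y) (x + y)" by simp
  also have "\<dots> = \<alpha> x y + \<alpha> y x"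
    by (simp del: alpha_self add: alpha_self[of x] alpha_self[of y])
  finally show ?thesis by (metis add.commute eq_neg_iff_add_eq_0)
qed

lemma alpha_in_V: "\<alpha> x y \<in> V"
  using quad_cocycle unfolding quad_cocycle_def cochain2_def by blast

lemma rho_alpha [simp]: "\<rho> z (\<alpha> x y) = 0"
  using alpha_invariant unfolding invariants_def by blast

lemma gamma_linear:
  "linear (\<lambda>x. \<gamma> x y z)" "linear (\<lambda>y. \<gamma> x y z)" "linear (\<gamma> x y)"
  using quad_cocycle unfolding quad_cocycle_def cochain3_def by blast+

lemmas gamma_simps [simp] =
  linear_add[OF gamma_linear(1)] linear_add[OF gamma_linear(2)] linear_add[OF gamma_linear(3)]
  linear_neg[OF gamma_linear(1)] linear_neg[OF gamma_linear(2)] linear_neg[OF gamma_linear(3)]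
  linear_scale[OF gamma_linear(1)] linear_scale[OF gamma_linear(2)] linear_scale[OF gamma_linear(3)]
  linear_0[OF gamma_linear(1)] linear_0[OF gamma_linear(2)] linear_0[OF gamma_linear(3)]

lemma gamma_alternating [simp]: "\<gamma> x x z = 0" "\<gamma> x y y = 0" "\<gamma> x y x = 0"
  using quad_cocycle unfolding quad_cocycle_def cochain3_def by blast+

lemma gamma_antisym: "\<gamma> y x z = - \<gamma> x y z" "\<gamma> x z y = - \<gamma> x y z"
proof -
  have "0 = \<gamma> (x + y) (x + y) z" "0 = \<gamma> x (y + z) (y + z)" by simp_all
  then have "\<gamma> x y z + \<gamma> y x z = 0" "\<gamma> x y z + \<gamma> x z y = 0"
    by (simp_all del: gamma_alternating
        add: gamma_alternating(1)[of x] gamma_alternating(1)[of y]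
          gamma_alternating(2)[of x y] gamma_alternating(2)[of x z])
  then show "\<gamma> y x z = - \<gamma> x y z" "\<gamma> x z y = - \<gamma> x y z" by (simp_all add: eq_neg_iff_add_eq_0 add.commute)
qed

lemma alpha_bracket_left: "\<alpha> (br x y) z = \<alpha> (br x z) y - \<alpha> (br y z) x"
proof -
  have "d2 br \<rho> \<alpha> x y z = 0"
    using quad_cocycle unfolding quad_cocycle_def by blast
  then show ?thesis unfolding d2_def by (simp add: algebra_simps)
qed

lemma d3_eq_half_wedge_sq: "d3 br \<gamma> x1 x2 x3 x4 = half_wedge_sq B \<alpha> x1 x2 x3 x4"
  using quad_cocycle unfolding quad_cocycle_def by blast

lemma gamma_bracket_central:
  assumes "W \<in> centre br" "\<forall>t. \<alpha> W t = 0" "br x1 w = 0" "br x2 w = 0"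
  shows "\<gamma> (br x1 x2) W w = 0"
proof -
  have "d3 br \<gamma> W w x1 x2 = half_wedge_sq B \<alpha> W w x1 x2" by (rule d3_eq_half_wedge_sq)
  then show ?thesis
    unfolding d3_def half_wedge_sq_def
    using assms centreD[OF assms(1)] by (simp add: bracket_antisym[of w])
qed

context
  fixes X1 X2 X3 :: 'a
  assumes derived_eq_span: "lcs0 br 1 = span {br X1 X2, br X1 X3}"
    and derived_central: "lcs0 br 1 \<subseteq> centre br"
begin

lemma alpha_derived_centralizer:
  assumes "P \<in> lcs0 br 1" "w \<in> centralizer br {X1, X2, X3}"
  shows "\<alpha> P w = 0"
proof -
  have "\<alpha> (br X1 X2) w = 0" "\<alpha> (br X1 X3) w = 0"
    using assms(2) alpha_bracket_left[of X1 X2 w] alpha_bracket_left[of X1 X3 w]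
    by (simp_all add: centralizer_def)
  then show ?thesis
    using assms(1) unfolding derived_eq_span
    by (auto intro: linear_eq_0_on_span[OF linear_alpha_left, where b = "{br X1 X2, br X1 X3}"])
qed

lemma alpha_bracket_centralizer:
  assumes "u \<in> centralizer br {X1, X2, X3}" "v \<in> centralizer br {X1, X2, X3}"
  shows "\<alpha> (br u v) t = 0"
proof -
  have "\<alpha> (br u t) v = 0" "\<alpha> (br v t) u = 0"
    using alpha_derived_centralizer[OF bracket_in_derived] assms by blast+
  then show ?thesis by (simp add: alpha_bracket_left[of u v t])
qed

lemma gamma_derived_centralizer_derived:
  assumes "W \<in> lcs0 br 1" "W \<noteq> 0" "\<forall>t. \<alpha> W t = 0"
    and "w \<in> centralizer br {X1, X2, X3}" "P \<in> lcs0 br 1" "Q \<in> lcs0 br 1"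
  shows "\<gamma> P w Q = 0"
proof -
  define Y Z where "Y = br X1 X2" and "Z = br X1 X3"
  have "br X1 w = 0" "br X2 w = 0" "br X3 w = 0" using assms(4) by (simp_all add: centralizer_def)
  moreover have "W \<in> centre br" using assms(1) derived_central by blast
  ultimately have "\<gamma> Y W w = 0" "\<gamma> Z W w = 0"
    unfolding Y_def Z_def using gamma_bracket_central assms(3) by simp_all
  obtain a b where W: "W = a *\<^sub>R Y + b *\<^sub>R Z"
    using assms(1) unfolding derived_eq_span span_pair_iff Y_def Z_def by blast
  \<comment> \<open>Both b * gamma Y Z w and a * gamma Y Z w vanish, while a or b is nonzero.\<close>
  have YZ: "\<gamma> Y Z w = 0"
  proof (rule ccontr)
    assume "\<gamma> Y Z w \<noteq> 0"
    moreover have "b * \<gamma> Y Z w = 0" "a * \<gamma> Y Z w = 0"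
      using \<open>\<gamma> Y W w = 0\<close> \<open>\<gamma> Z W w = 0\<close> unfolding W by (simp_all add: gamma_antisym(1)[of Z Y])
    ultimately show False using W assms(2) by simp
  qed
  obtain s t s' t' where "P = s *\<^sub>R Y + t *\<^sub>R Z" "Q = s' *\<^sub>R Y + t' *\<^sub>R Z"
    using assms(5,6) unfolding derived_eq_span span_pair_iff Y_def Z_def by blast
  then show ?thesis
    using YZ gamma_antisym(2)[of Y Z w] gamma_antisym(2)[of Z Y w] gamma_antisym(1)[of Y Z w]
    by simp
qed

lemma gamma_bracket_centralizer_derived:
  assumes "u \<in> centralizer br {X1, X2, X3}" "v \<in> centralizer br {X1, X2, X3}"
    and "br u v \<noteq> 0" "X \<in> lcs0 br 1"
  shows "\<gamma> L (br u v) X = B (\<alpha> u v) (\<alpha> L X)"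
proof -
  have vanish: "\<gamma> P w X = 0" if "P \<in> lcs0 br 1" "w \<in> centralizer br {X1, X2, X3}" for P w
    using gamma_derived_centralizer_derived[OF bracket_in_derived assms(3)] that assms
      alpha_bracket_centralizer by blast
  have "d3 br \<gamma> u v L X = half_wedge_sq B \<alpha> u v L X" by (rule d3_eq_half_wedge_sq)
  moreover have "\<gamma> (br u L) v X = 0" "\<gamma> (br v L) u X = 0"
    using vanish[OF bracket_in_derived] assms(1,2) by blast+
  moreover have "\<alpha> u X = 0" "\<alpha> v X = 0"
    using alpha_derived_centralizer[OF assms(4)] assms(1,2) alpha_antisym[of X] by simp_all
  moreover have "br u X = 0" "br v X = 0" "br L X = 0"
    using assms(4) derived_central centreD by blast+
  ultimately have "- \<gamma> (br u v) L X = B (\<alpha> u v) (\<alpha> L X)"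
    unfolding d3_def half_wedge_sq_def by simp
  then show ?thesis using gamma_antisym(1)[of "br u v" L X] by simp
qed

lemma centralizer_bracket_eq_0:
  assumes "cond_A br V \<rho> B \<alpha> \<gamma> 1"
    and "u \<in> centralizer br {X1, X2, X3}" "v \<in> centralizer br {X1, X2, X3}"
  shows "br u v = 0"
proof (rule ccontr)
  assume nonzero: "br u v \<noteq> 0"
  have "br u v \<in> lsub br V \<rho> 1"
    unfolding lsub_def using bracket_in_derived derived_central by auto
  moreover have "- \<alpha> u v \<in> V" using alpha_in_V subspace_V subspace_neg by blast
  moreover have "\<alpha> L (br u v) = 0" for L
    using alpha_bracket_centralizer[OF assms(2,3)] alpha_antisym[of L] by simp
  moreover have "\<gamma> L (br u v) X = - B (- \<alpha> u v) (\<alpha> L X) + (\<lambda>_. 0) (br L X)"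
    if "X \<in> lcs0 br 1" for L X
    using gamma_bracket_centralizer_derived[OF assms(2,3) nonzero that] by simp
  ultimately have "br u v = 0"
    using assms(1) linear_zero unfolding cond_A_def by blast
  with nonzero show False ..
qed

end
end

theorem lemma6:
  fixes br :: "'a::euclidean_space \<Rightarrow> 'a \<Rightarrow> 'a" and n :: nat
    and V :: "'v::euclidean_space set" and \<rho> :: "'a \<Rightarrow> 'v \<Rightarrow> 'v"
    and B :: "'v \<Rightarrow> 'v \<Rightarrow> real" and \<alpha> :: "'a \<Rightarrow> 'a \<Rightarrow> 'v"
    and \<gamma> :: "'a \<Rightarrow> 'a \<Rightarrow> 'a \<Rightarrow> real"
  assumes "lie_algebra br"
    and "nilpotent_lie br"
    and "admissible_data br V \<rho> B \<alpha> \<gamma>"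
    and "dim (lcs0 br 1) = 2"
    and "lcs0 br 1 \<subseteq> centre br"
    and "DIM('a) = n + 2"
  shows "3 \<le> n \<and> (\<exists>X Y Z. good_basis br n X Y Z) \<and>
         (\<forall>X Y Z j0. good_basis br n X Y Z \<and>
            (\<forall>j. j0 \<le> j \<and> j \<le> n \<longrightarrow>
               br (X 1) (X j) = 0 \<and> br (X 2) (X j) = 0 \<and> br (X 3) (X j) = 0)
            \<longrightarrow> (\<forall>r s. j0 \<le> r \<and> r \<le> n \<and> j0 \<le> s \<and> s \<le> n \<longrightarrow> br (X r) (X s) = 0))"
proof -
  interpret invariant_quad_cocycle br V \<rho> B \<alpha> \<gamma>
    using assms(1,3) unfolding admissible_data_def by unfold_locales blast+
  have cond_A: "cond_A br V \<rho> B \<alpha> \<gamma> 1"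
    using assms(3) unfolding admissible_data_def by blast
  have "br (X r) (X s) = 0"
    if "good_basis br n X Y Z"
      and "\<forall>j. j0 \<le> j \<and> j \<le> n \<longrightarrow> br (X 1) (X j) = 0 \<and> br (X 2) (X j) = 0 \<and> br (X 3) (X j) = 0"
      and "j0 \<le> r \<and> r \<le> n \<and> j0 \<le> s \<and> s \<le> n"
    for X Y Z j0 r s
  proof -
    have "X r \<in> centralizer br {X 1, X 2, X 3}" "X s \<in> centralizer br {X 1, X 2, X 3}"
      using that(2,3) by (simp_all add: centralizer_def)
    then show ?thesis
      using centralizer_bracket_eq_0[OF derived_eq_span_good_basis[OF that(1) assms(4)] assms(5) cond_A]
      by blast
  qed
  then show ?thesis using exists_good_basis[OF assms(4,5,6)] by blast
qed

end
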